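(* For $g\ge1$ and $k,\ell\ge2$, $\mathrm{LMod}_{p_k}(S_g)\cap\mathrm{LMod}_{p_\ell}(S_g)=\mathrm{LMod}_{p_d}(S_g)$, where $d=\mathrm{lcm}(k,\ell)$.
   Context: $S_g$ is the closed orientable surface of genus $g$, $\mathrm{Mod}(S_g)$ its mapping class group. Fix simple closed curves $a_1,b_1,\dots,a_g,b_g$ whose classes form a standard symplectic basis of $H_1(S_g,\mathbb Z)$. For $m\ge2$, $p_m:S_{m(g-1)+1}\to S_g$ is the connected regular $m$-sheeted cover with deck group $\mathbb Z_m$ corresponding to the kernel of the epimorphism $\pi_1(S_g)\to\mathbb Z_m$ sending $b_1\mapsto1$ and $a_1,a_2,b_2,\dots,a_g,b_g\mapsto0$, and $\mathrm{LMod}_{p_m}(S_g)$ is the set of mapping classes of $S_g$ represented by a homeomorphism that lifts through $p_m$ to a homeomorphism of $S_{m(g-1)+1}$. *)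

theory Defs
  imports "HOL-Homology.Homology" "HOL-Algebra.Elementary_Groups"
begin

text \<open>Closed orientable surfaces are modelled as subsets of Euclidean spaces
 (every closed surface embeds in some R^n).  A closed surface: compact,
 connected, and locally homeomorphic to the plane.\<close>

definition closed_surface :: "'a::euclidean_space set \<Rightarrow> bool" where
  "closed_surface S \<longleftrightarrow> compact S \<and> connected S \<and> S \<noteq> {} \<and>
     (\<forall>x\<in>S. \<exists>U. openin (top_of_set S) U \<and> x \<in> U \<and>
                 U homeomorphic (UNIV :: (real^2) set))"

definition orientable_closed_surface :: "'a::euclidean_space set \<Rightarrow> bool" where
  "orientable_closed_surface S \<longleftrightarrow> closed_surface S \<and>
     homology_group 2 (top_of_set S) \<cong> integer_group"

definition orientation_preserving :: "'a::euclidean_space set \<Rightarrow> ('a \<Rightarrow> 'a) \<Rightarrow> bool" where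
  "orientation_preserving S f \<longleftrightarrow>
     (\<forall>c \<in> carrier (homology_group 2 (top_of_set S)).
        hom_induced 2 (top_of_set S) {} (top_of_set S) {} f c = c)"

definition homeo_of :: "'a::topological_space set \<Rightarrow> ('a \<Rightarrow> 'a) \<Rightarrow> bool" where
  "homeo_of S f \<longleftrightarrow> (\<exists>g. homeomorphism S S f g)"

definition isotopic :: "'a::topological_space set \<Rightarrow> ('a \<Rightarrow> 'a) \<Rightarrow> ('a \<Rightarrow> 'a) \<Rightarrow> bool" where
  "isotopic S f h \<longleftrightarrow>
     (\<exists>H :: real \<times> 'a \<Rightarrow> 'a. continuous_on ({0..1} \<times> S) H \<and>
        (\<forall>t\<in>{0..1}. homeo_of S (\<lambda>x. H (t, x))) \<and>
        (\<forall>x\<in>S. H (0, x) = f x) \<and> (\<forall>x\<in>S. H (1, x) = h x))"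

definition loop_in :: "'a::topological_space set \<Rightarrow> (real \<Rightarrow> 'a) \<Rightarrow> bool" where
  "loop_in S \<gamma> \<longleftrightarrow> path \<gamma> \<and> path_image \<gamma> \<subseteq> S \<and> pathstart \<gamma> = pathfinish \<gamma>"

definition simple_closed_curve :: "'a::topological_space set \<Rightarrow> (real \<Rightarrow> 'a) \<Rightarrow> bool" where
  "simple_closed_curve S \<gamma> \<longleftrightarrow> loop_in S \<gamma> \<and> simple_path \<gamma>"

definition loop_class :: "'a::topological_space set \<Rightarrow> (real \<Rightarrow> 'a) \<Rightarrow> 'a chain set" where
  "loop_class S \<gamma> =
     homologous_rel_set 1 (top_of_set S) {}
       (frag_of (restrict (\<lambda>v. \<gamma> (v 1)) (standard_simplex 1)))"

text \<open>Curves a_1,b_1,...,a_g,b_g (indices 1..g) form a standard symplectic system: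
 simple closed curves, a_i and b_i meet in exactly one point, all other pairs
 disjoint, and their homology classes form a Z-basis of H_1(S).  (Given the
 basis property, unimodularity of the intersection form forces a_i.b_i = +-1,
 so the classes form a symplectic basis up to the orientation of the b_i.)\<close>
definition standard_curve_system ::
  "'a::euclidean_space set \<Rightarrow> nat \<Rightarrow> (nat \<Rightarrow> real \<Rightarrow> 'a) \<Rightarrow> (nat \<Rightarrow> real \<Rightarrow> 'a) \<Rightarrow> bool" where
  "standard_curve_system S g a b \<longleftrightarrow>
     (\<forall>i\<in>{1..g}. simple_closed_curve S (a i) \<and> simple_closed_curve S (b i)) \<and>
     (\<forall>i\<in>{1..g}. \<exists>z. path_image (a i) \<inter> path_image (b i) = {z}) \<and>
     (\<forall>i\<in>{1..g}. \<forall>j\<in>{1..g}. i \<noteq> j \<longrightarrow>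
         path_image (a i) \<inter> path_image (a j) = {} \<and>
         path_image (b i) \<inter> path_image (b j) = {} \<and>
         path_image (a i) \<inter> path_image (b j) = {}) \<and>
     (\<forall>y \<in> carrier (homology_group 1 (top_of_set S)).
        \<exists>!(c, e). c \<in> extensional {1..g} \<and> e \<in> extensional {1..g} \<and>
          y = finprod (homology_group 1 (top_of_set S))
                (\<lambda>i. loop_class S (a i) [^]\<^bsub>homology_group 1 (top_of_set S)\<^esub> (c i :: int)
                     \<otimes>\<^bsub>homology_group 1 (top_of_set S)\<^esub>
                     loop_class S (b i) [^]\<^bsub>homology_group 1 (top_of_set S)\<^esub> (e i :: int))
                {1..g})"

text \<open>The epimorphism to Z_m sending b_1 to 1 and all other basis curves to 0
 (the target is abelian, so it factors through H_1).\<close>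
definition cover_hom ::
  "'a::euclidean_space set \<Rightarrow> nat \<Rightarrow> (nat \<Rightarrow> real \<Rightarrow> 'a) \<Rightarrow> (nat \<Rightarrow> real \<Rightarrow> 'a) \<Rightarrow> nat
     \<Rightarrow> ('a chain set \<Rightarrow> int) \<Rightarrow> bool" where
  "cover_hom S g a b m \<phi> \<longleftrightarrow>
     \<phi> \<in> hom (homology_group 1 (top_of_set S)) (integer_mod_group m) \<and>
     \<phi> (loop_class S (b 1)) = 1 \<and>
     (\<forall>i\<in>{1..g}. \<phi> (loop_class S (a i)) = 0) \<and>
     (\<forall>i\<in>{2..g}. \<phi> (loop_class S (b i)) = 0)"

text \<open>p : X \<rightarrow> S is the connected regular m-sheeted cover associated with the kernel
 of that epimorphism: X is path-connected, p is a covering map, and a loop in S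
 lifts to a closed loop in X (from any starting point) iff its class lies in the kernel.\<close>
definition is_cover_p ::
  "'a::euclidean_space set \<Rightarrow> nat \<Rightarrow> (nat \<Rightarrow> real \<Rightarrow> 'a) \<Rightarrow> (nat \<Rightarrow> real \<Rightarrow> 'a) \<Rightarrow> nat
     \<Rightarrow> 'b::euclidean_space set \<Rightarrow> ('b \<Rightarrow> 'a) \<Rightarrow> bool" where
  "is_cover_p S g a b m X p \<longleftrightarrow>
     covering_space X p S \<and> path_connected X \<and>
     (\<exists>\<phi>. cover_hom S g a b m \<phi> \<and>
        (\<forall>\<gamma> \<gamma>'. loop_in S \<gamma> \<and> path \<gamma>' \<and> path_image \<gamma>' \<subseteq> X \<and>
                  (\<forall>t\<in>{0..1}. p (\<gamma>' t) = \<gamma> t)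
               \<longrightarrow> (pathfinish \<gamma>' = pathstart \<gamma>' \<longleftrightarrow> \<phi> (loop_class S \<gamma>) = 0)))"

definition lifts_through :: "'b::topological_space set \<Rightarrow> ('b \<Rightarrow> 'a) \<Rightarrow> ('a \<Rightarrow> 'a) \<Rightarrow> bool" where
  "lifts_through X p f \<longleftrightarrow> (\<exists>F. homeo_of X F \<and> (\<forall>x\<in>X. p (F x) = f (p x)))"

text \<open>Membership of the mapping class of f in LMod_p(S): some representative
 (a homeomorphism isotopic to f) lifts through p.\<close>
definition in_LMod :: "'a::topological_space set \<Rightarrow> 'b::topological_space set \<Rightarrow> ('b \<Rightarrow> 'a)
     \<Rightarrow> ('a \<Rightarrow> 'a) \<Rightarrow> bool" where
  "in_LMod S X p f \<longleftrightarrow> (\<exists>h. homeo_of S h \<and> isotopic S f h \<and> lifts_through X p h)"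

end

theory Submission
  imports Defs
begin

text \<open>By the lifting criterion for covering spaces, a homeomorphism \<open>f\<close> lifts through the
  cyclic cover \<open>p\<^sub>m\<close> iff \<open>f\<^sub>*\<close> preserves the kernel of the defining epimorphism
  \<open>\<phi>\<^sub>m : H\<^sub>1(S) \<rightarrow> \<int>\<^sub>m\<close>; an isotopy does not change \<open>f\<^sub>*\<close>, so the same holds for the mapping
  class. A kernel-preserving \<open>f\<^sub>*\<close> induces an endomorphism of \<open>H\<^sub>1(S)/ker \<phi>\<^sub>m \<cong> \<int>\<^sub>m\<close>, i.e. it
  acts as \<open>\<phi>\<^sub>m(f\<^sub>* x) = c \<phi>\<^sub>m(x)\<close>. Since \<open>\<phi>\<^sub>k = \<phi>\<^sub>m mod k\<close> for \<open>k | m\<close>, such an \<open>f\<^sub>*\<close> also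
  preserves \<open>ker \<phi>\<^sub>k\<close>; conversely \<open>ker \<phi>\<^bsub>lcm(k,l)\<^esub> = ker \<phi>\<^sub>k \<inter> ker \<phi>\<^sub>l\<close>.\<close>

abbreviation H1 :: "'a::topological_space set \<Rightarrow> 'a chain set monoid" where
  "H1 S \<equiv> homology_group 1 (top_of_set S)"

abbreviation H1_induced :: "'a::topological_space set \<Rightarrow> ('a \<Rightarrow> 'a) \<Rightarrow> 'a chain set \<Rightarrow> 'a chain set"
  where "H1_induced S h \<equiv> hom_induced 1 (top_of_set S) {} (top_of_set S) {} h"

subsection \<open>Homology classes of loops\<close>

lemma loop_in_singular_simplex:
  assumes "loop_in S \<gamma>"
  shows "singular_simplex 1 (top_of_set S) (restrict (\<lambda>v. \<gamma> (v 1)) (standard_simplex 1))"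
proof -
  have "continuous_map (powertop_real UNIV) euclideanreal (\<lambda>v. v 1)"
    by (rule continuous_map_product_projection) simp
  then have "continuous_map (subtopology (powertop_real UNIV) (standard_simplex 1))
               euclideanreal (\<lambda>v. v 1)"
    by (rule continuous_map_from_subtopology)
  moreover have "(\<lambda>v. v 1) ` standard_simplex 1 \<subseteq> {0..1}"
    by (auto simp: standard_simplex_def)
  ultimately have proj: "continuous_map (subtopology (powertop_real UNIV) (standard_simplex 1))
                           (top_of_set {0..1}) (\<lambda>v. v 1)"
    by (auto simp: continuous_map_in_subtopology topspace_standard_simplex)
  have "continuous_map (top_of_set {0..1}) (top_of_set S) \<gamma>"
    using assms unfolding loop_in_def path_def path_image_def
    by (simp add: continuous_map_in_subtopology image_subset_iff)
  with proj have "continuous_map (subtopology (powertop_real UNIV) (standard_simplex 1))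
                    (top_of_set S) (\<gamma> \<circ> (\<lambda>v. v 1))"
    using continuous_map_compose by blast
  then have "continuous_map (subtopology (powertop_real UNIV) (standard_simplex 1))
               (top_of_set S) (restrict (\<lambda>v. \<gamma> (v 1)) (standard_simplex 1))"
    by (rule continuous_map_eq) (auto simp: topspace_standard_simplex)
  then show ?thesis
    by (simp add: singular_simplex_def)
qed

lemma loop_in_singular_relcycle:
  assumes "loop_in S \<gamma>"
  shows "singular_relcycle 1 (top_of_set S) {} (frag_of (restrict (\<lambda>v. \<gamma> (v 1)) (standard_simplex 1)))"
proof -
  let ?s = "restrict (\<lambda>v. \<gamma> (v 1)) (standard_simplex 1)"
  have closed: "\<gamma> 0 = \<gamma> 1"
    using assms by (simp add: loop_in_def pathstart_def pathfinish_def)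
  have "singular_face 1 0 ?s = singular_face 1 1 ?s"
  proof
    fix x
    show "singular_face 1 0 ?s x = singular_face 1 1 ?s x"
    proof (cases "x \<in> standard_simplex 0")
      case True
      then have "simplical_face 0 x \<in> standard_simplex 1" "simplical_face 1 x \<in> standard_simplex 1"
        using simplical_face_in_standard_simplex[of 1 _ x] by auto
      with True closed show ?thesis
        by (simp add: singular_face_def standard_simplex_0 simplical_face_def)
    qed (simp add: singular_face_def)
  qed
  then have "chain_boundary 1 (frag_of ?s) = 0"
    by (simp add: chain_boundary_of)
  with loop_in_singular_simplex[OF assms] show ?thesis
    by (simp add: singular_cycle singular_chain_of)
qed

lemma loop_class_in_carrier:
  assumes "loop_in S \<gamma>"
  shows "loop_class S \<gamma> \<in> carrier (H1 S)"
  using carrier_relative_homology_group[of 1 "top_of_set S" "{}"] loop_in_singular_relcycle[OF assms]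
  by (simp add: loop_class_def)

lemma loop_in_compose:
  assumes "loop_in S \<gamma>" "continuous_on S h" "h ` S \<subseteq> T"
  shows "loop_in T (h \<circ> \<gamma>)"
  using assms unfolding loop_in_def
  by (metis path_continuous_image path_image_compose pathfinish_compose pathstart_compose
      continuous_on_subset image_mono order_trans)

lemma H1_induced_loop_class:
  assumes "loop_in S \<gamma>" "continuous_on S h" "h ` S \<subseteq> S"
  shows "H1_induced S h (loop_class S \<gamma>) = loop_class S (h \<circ> \<gamma>)"
proof -
  have h: "continuous_map (top_of_set S) (top_of_set S) h"
    using assms by auto
  have "hom_induced (int 1) (top_of_set S) {} (top_of_set S) {} h (loop_class S \<gamma>)
          = homologous_rel_set 1 (top_of_set S) {}
              (chain_map 1 h (frag_of (restrict (\<lambda>v. \<gamma> (v 1)) (standard_simplex 1))))"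
    unfolding loop_class_def
    by (rule hom_induced_chain_map[OF h _ loop_in_singular_relcycle[OF assms(1)]]) simp
  then have "H1_induced S h (loop_class S \<gamma>) = homologous_rel_set 1 (top_of_set S) {}
               (chain_map 1 h (frag_of (restrict (\<lambda>v. \<gamma> (v 1)) (standard_simplex 1))))"
    by simp
  also have "chain_map 1 h (frag_of (restrict (\<lambda>v. \<gamma> (v 1)) (standard_simplex 1)))
               = frag_of (restrict (\<lambda>v. (h \<circ> \<gamma>) (v 1)) (standard_simplex 1))"
    by (simp add: simplex_map_def restrict_def cong: if_cong)
  finally show ?thesis
    by (simp add: loop_class_def)
qed

lemma standard_curve_system_loops:
  assumes "standard_curve_system S g a b" "i \<in> {1..g}"
  shows "loop_in S (a i)" "loop_in S (b i)"
  using assms unfolding standard_curve_system_def simple_closed_curve_def by auto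

lemma hom_finprod:
  assumes G: "comm_group G" and K: "comm_group K" and \<psi>: "\<psi> \<in> hom G K"
    and "finite I" and "F \<in> I \<rightarrow> carrier G"
  shows "\<psi> (finprod G F I) = finprod K (\<psi> \<circ> F) I"
  using \<open>finite I\<close> \<open>F \<in> I \<rightarrow> carrier G\<close>
proof (induction I rule: finite_induct)
  case empty
  then show ?case
    using G K \<psi> by (simp add: comm_group_def comm_monoid.finprod_empty hom_one)
next
  case (insert x I)
  interpret G: comm_group G by (fact G)
  interpret K: comm_group K by (fact K)
  have F: "F \<in> I \<rightarrow> carrier G" "F x \<in> carrier G"
    using insert.prems by auto
  have "\<psi> \<circ> F \<in> insert x I \<rightarrow> carrier K"
    using insert.prems \<psi> hom_in_carrier by fastforce
  then show ?case
    using insert F \<psi> by (simp add: hom_mult o_def)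
qed

lemma hom_eq_on_curve_system:
  assumes scs: "standard_curve_system S g a b" and K: "comm_group K"
    and \<psi>1: "\<psi>1 \<in> hom (H1 S) K" and \<psi>2: "\<psi>2 \<in> hom (H1 S) K"
    and eq_a: "\<And>i. i \<in> {1..g} \<Longrightarrow> \<psi>1 (loop_class S (a i)) = \<psi>2 (loop_class S (a i))"
    and eq_b: "\<And>i. i \<in> {1..g} \<Longrightarrow> \<psi>1 (loop_class S (b i)) = \<psi>2 (loop_class S (b i))"
    and x: "x \<in> carrier (H1 S)"
  shows "\<psi>1 x = \<psi>2 x"
proof -
  have H: "comm_group (H1 S)"
    by (rule abelian_homology_group)
  then have groups: "group (H1 S)" "group K"
    using K by (simp_all add: comm_group_def)
  obtain c e where x_eq: "x = finprod (H1 S)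
      (\<lambda>i. loop_class S (a i) [^]\<^bsub>H1 S\<^esub> (c i :: int) \<otimes>\<^bsub>H1 S\<^esub> loop_class S (b i) [^]\<^bsub>H1 S\<^esub> (e i :: int))
      {1..g}"
    using scs x unfolding standard_curve_system_def by fast
  define F where "F i = loop_class S (a i) [^]\<^bsub>H1 S\<^esub> c i \<otimes>\<^bsub>H1 S\<^esub> loop_class S (b i) [^]\<^bsub>H1 S\<^esub> e i"
    for i
  have cls: "loop_class S (a i) \<in> carrier (H1 S)" "loop_class S (b i) \<in> carrier (H1 S)"
    if "i \<in> {1..g}" for i
    using loop_class_in_carrier standard_curve_system_loops[OF scs that] by blast+
  then have pows: "loop_class S (a i) [^]\<^bsub>H1 S\<^esub> c i \<in> carrier (H1 S)"
      "loop_class S (b i) [^]\<^bsub>H1 S\<^esub> e i \<in> carrier (H1 S)"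
    if "i \<in> {1..g}" for i
    using groups(1) that by (auto intro: group.int_pow_closed)
  then have F: "F \<in> {1..g} \<rightarrow> carrier (H1 S)"
    using groups(1) by (auto simp: F_def intro!: monoid.m_closed group.is_monoid)
  have "finprod K (\<psi>1 \<circ> F) {1..g} = finprod K (\<psi>2 \<circ> F) {1..g}"
  proof (rule comm_monoid.finprod_cong')
    show "comm_monoid K"
      using K by (simp add: comm_group_def)
    show "\<psi>2 \<circ> F \<in> {1..g} \<rightarrow> carrier K"
      using F \<psi>2 hom_in_carrier by fastforce
    fix i assume i: "i \<in> {1..g}"
    show "(\<psi>1 \<circ> F) i = (\<psi>2 \<circ> F) i"
      using pows[OF i] cls[OF i] eq_a[OF i] eq_b[OF i] \<psi>1 \<psi>2 groups
      by (simp add: F_def hom_mult hom_int_pow)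
  qed simp
  with hom_finprod[OF H K \<psi>1 _ F] hom_finprod[OF H K \<psi>2 _ F] show ?thesis
    by (simp add: x_eq F_def[abs_def])
qed

lemma isotopic_hom_induced_eq:
  assumes "isotopic S f h"
  shows "hom_induced p (top_of_set S) {} (top_of_set S) {} f = hom_induced p (top_of_set S) {} (top_of_set S) {} h"
proof -
  obtain H :: "real \<times> 'a \<Rightarrow> 'a" where H: "continuous_on ({0..1} \<times> S) H"
    and H_homeo: "\<forall>t\<in>{0..1}. homeo_of S (\<lambda>x. H (t, x))"
    and H_f: "\<forall>x\<in>S. H (0, x) = f x" and H_h: "\<forall>x\<in>S. H (1, x) = h x"
    using assms unfolding isotopic_def by blast
  have "H (t, x) \<in> S" if "t \<in> {0..1}" "x \<in> S" for t x
    using H_homeo that unfolding homeo_of_def homeomorphism_def by blast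
  then have "homotopic_with (\<lambda>_. True) (top_of_set S) (top_of_set S) (\<lambda>x. H (0, x)) (\<lambda>x. H (1, x))"
    unfolding homotopic_with_def using H by (intro exI[of _ H]) auto
  then have "hom_induced p (top_of_set S) {} (top_of_set S) {} (\<lambda>x. H (0, x))
           = hom_induced p (top_of_set S) {} (top_of_set S) {} (\<lambda>x. H (1, x))"
    by (rule homology_homotopy_empty)
  moreover have "hom_induced p (top_of_set S) {} (top_of_set S) {} (\<lambda>x. H (0, x))
               = hom_induced p (top_of_set S) {} (top_of_set S) {} f"
    by (rule hom_induced_eq) (simp add: H_f)
  moreover have "hom_induced p (top_of_set S) {} (top_of_set S) {} (\<lambda>x. H (1, x))
               = hom_induced p (top_of_set S) {} (top_of_set S) {} h"
    by (rule hom_induced_eq) (simp add: H_h)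
  ultimately show ?thesis
    by simp
qed

lemma isotopic_refl:
  assumes "homeo_of S f"
  shows "isotopic S f f"
proof -
  have "continuous_on S f"
    using assms by (auto simp: homeo_of_def homeomorphism_def)
  then have "continuous_on ({0..1} \<times> S) (\<lambda>z. f (snd z))"
    by (rule continuous_on_compose2[OF _ continuous_on_snd]) auto
  with assms show ?thesis
    unfolding isotopic_def by (intro exI[of _ "\<lambda>z. f (snd z)"]) auto
qed

lemma hom_induced_homeomorphism_inverse:
  assumes "homeomorphism S S h h'" "y \<in> carrier (homology_group p (top_of_set S))"
  shows "hom_induced p (top_of_set S) {} (top_of_set S) {} h
           (hom_induced p (top_of_set S) {} (top_of_set S) {} h' y) = y"
proof -
  have h: "continuous_map (top_of_set S) (top_of_set S) h"
    and h': "continuous_map (top_of_set S) (top_of_set S) h'"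
    using assms(1) by (auto simp: homeomorphism_def)
  have "hom_induced p (top_of_set S) {} (top_of_set S) {} h
          (hom_induced p (top_of_set S) {} (top_of_set S) {} h' y)
        = hom_induced p (top_of_set S) {} (top_of_set S) {} (h \<circ> h') y"
    by (rule hom_induced_compose'[OF h' _ h]) auto
  also have "\<dots> = y"
  proof (rule hom_induced_id_gen[OF _ _ assms(2)])
    show "continuous_map (top_of_set S) (top_of_set S) (h \<circ> h')"
      using h h' continuous_map_compose by blast
    show "(h \<circ> h') x = x" if "x \<in> topspace (top_of_set S)" for x
      using assms(1) that by (simp add: homeomorphism_def)
  qed
  finally show ?thesis .
qed

lemma hom_integer_mod_group_scale:
  assumes "\<phi> \<in> hom G (integer_mod_group m)" "m > 0"
  shows "(\<lambda>x. (c * \<phi> x) mod int m) \<in> hom G (integer_mod_group m)"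
  using assms unfolding hom_def
  by (auto simp: carrier_integer_mod_group mod_mult_right_eq mod_add_eq distrib_left)

lemma hom_integer_mod_group_reduce:
  assumes "\<phi> \<in> hom G (integer_mod_group d)" "d > 0" "k > 0" "k dvd d"
  shows "(\<lambda>x. \<phi> x mod int k) \<in> hom G (integer_mod_group k)"
proof -
  have "int k dvd int d"
    using assms(4) by simp
  with assms show ?thesis
    unfolding hom_def by (auto simp: carrier_integer_mod_group mod_mod_cancel mod_add_eq)
qed

lemma eq_0_if_unit_mult_mod_eq_0:
  fixes c u v m :: int
  assumes "(c * v) mod m = 1" "(c * u) mod m = 0" "0 \<le> u" "u < m"
  shows "u = 0"
proof -
  have "u mod m = (u * ((c * v) mod m)) mod m"
    using assms(1) by simp
  also have "\<dots> = (((c * u) mod m) * v) mod m"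
    by (simp add: mod_mult_right_eq mod_mult_left_eq ac_simps)
  also have "\<dots> = 0"
    using assms(2) by simp
  finally show ?thesis
    using assms(3,4) by simp
qed

subsection \<open>The defining epimorphisms of the cyclic covers\<close>

lemma cover_hom_range:
  assumes "cover_hom S g a b m \<phi>" "x \<in> carrier (H1 S)" "m > 0"
  shows "0 \<le> \<phi> x" "\<phi> x < int m"
  using assms hom_in_carrier[of \<phi> _ "integer_mod_group m" x]
  unfolding cover_hom_def by (auto simp: carrier_integer_mod_group)

lemma cover_hom_reduce:
  assumes scs: "standard_curve_system S g a b"
    and \<phi>k: "cover_hom S g a b k \<phi>k" and \<phi>d: "cover_hom S g a b d \<phi>d"
    and "k dvd d" "k \<ge> 2" "d > 0" and x: "x \<in> carrier (H1 S)"
  shows "\<phi>k x = \<phi>d x mod int k"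
proof (rule hom_eq_on_curve_system[OF scs _ _ _ _ _ x])
  show "\<phi>k \<in> hom (H1 S) (integer_mod_group k)"
    using \<phi>k by (simp add: cover_hom_def)
  show "(\<lambda>x. \<phi>d x mod int k) \<in> hom (H1 S) (integer_mod_group k)"
    using \<phi>d assms by (intro hom_integer_mod_group_reduce) (auto simp: cover_hom_def)
  fix i assume i: "i \<in> {1..g}"
  then show "\<phi>k (loop_class S (a i)) = \<phi>d (loop_class S (a i)) mod int k"
    using \<phi>k \<phi>d by (simp add: cover_hom_def)
  show "\<phi>k (loop_class S (b i)) = \<phi>d (loop_class S (b i)) mod int k"
    using i \<phi>k \<phi>d \<open>k \<ge> 2\<close> by (cases "i = 1") (auto simp: cover_hom_def)
qed simp

lemma cover_hom_lcm_kernel: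
  assumes scs: "standard_curve_system S g a b" and "k \<ge> 2" "l \<ge> 2"
    and \<phi>k: "cover_hom S g a b k \<phi>k" and \<phi>l: "cover_hom S g a b l \<phi>l"
    and \<phi>d: "cover_hom S g a b (lcm k l) \<phi>d" and x: "x \<in> carrier (H1 S)"
  shows "\<phi>d x = 0 \<longleftrightarrow> \<phi>k x = 0 \<and> \<phi>l x = 0"
proof -
  have d: "lcm k l > 0"
    using assms by (simp add: lcm_pos_nat)
  have "\<phi>d x = 0 \<longleftrightarrow> int (lcm k l) dvd \<phi>d x"
    using cover_hom_range[OF \<phi>d x d] by (metis dvd_0_right order_le_less zdvd_not_zless)
  also have "\<dots> \<longleftrightarrow> int k dvd \<phi>d x \<and> int l dvd \<phi>d x"
    by (simp only: lcm_int_int_eq[symmetric] lcm_least_iff)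
  also have "\<dots> \<longleftrightarrow> \<phi>k x = 0 \<and> \<phi>l x = 0"
    using cover_hom_reduce[OF scs \<phi>k \<phi>d dvd_lcm1 \<open>k \<ge> 2\<close> d x]
      cover_hom_reduce[OF scs \<phi>l \<phi>d dvd_lcm2 \<open>l \<ge> 2\<close> d x]
    by (simp add: dvd_eq_mod_eq_0)
  finally show ?thesis .
qed

lemma cover_hom_induced_scale:
  assumes scs: "standard_curve_system S g a b" and \<phi>: "cover_hom S g a b m \<phi>"
    and "m > 0" "g \<ge> 1"
    and ker_a: "\<And>i. i \<in> {1..g} \<Longrightarrow> \<phi> (H1_induced S h (loop_class S (a i))) = 0"
    and ker_b: "\<And>i. i \<in> {2..g} \<Longrightarrow> \<phi> (H1_induced S h (loop_class S (b i))) = 0"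
    and x: "x \<in> carrier (H1 S)"
  shows "\<phi> (H1_induced S h x) = (\<phi> (H1_induced S h (loop_class S (b 1))) * \<phi> x) mod int m"
proof -
  let ?c = "\<phi> (H1_induced S h (loop_class S (b 1)))"
  have \<phi>_hom: "\<phi> \<in> hom (H1 S) (integer_mod_group m)"
    using \<phi> by (simp add: cover_hom_def)
  have "loop_class S (b 1) \<in> carrier (H1 S)"
    using loop_class_in_carrier standard_curve_system_loops[OF scs] \<open>g \<ge> 1\<close> by auto
  then have "H1_induced S h (loop_class S (b 1)) \<in> carrier (H1 S)"
    using hom_in_carrier[OF hom_induced_hom] by blast
  then have c: "0 \<le> ?c" "?c < int m"
    using cover_hom_range[OF \<phi>] \<open>m > 0\<close> by auto
  have "(\<phi> \<circ> H1_induced S h) x = (?c * \<phi> x) mod int m"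
  proof (rule hom_eq_on_curve_system[OF scs _ _ _ _ _ x])
    show "\<phi> \<circ> H1_induced S h \<in> hom (H1 S) (integer_mod_group m)"
      using hom_induced_hom \<phi>_hom by (rule hom_compose)
    show "(\<lambda>x. (?c * \<phi> x) mod int m) \<in> hom (H1 S) (integer_mod_group m)"
      using \<phi>_hom \<open>m > 0\<close> by (rule hom_integer_mod_group_scale)
    fix i assume i: "i \<in> {1..g}"
    then show "(\<phi> \<circ> H1_induced S h) (loop_class S (a i)) = (?c * \<phi> (loop_class S (a i))) mod int m"
      using ker_a \<phi> by (simp add: cover_hom_def)
    show "(\<phi> \<circ> H1_induced S h) (loop_class S (b i)) = (?c * \<phi> (loop_class S (b i))) mod int m"
      using i ker_b \<phi> c by (cases "i = 1") (auto simp: cover_hom_def)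
  qed simp
  then show ?thesis
    by simp
qed

definition preserves_kernel :: "'a::topological_space set \<Rightarrow> ('a chain set \<Rightarrow> int) \<Rightarrow> ('a \<Rightarrow> 'a) \<Rightarrow> bool"
  where "preserves_kernel S \<phi> h \<longleftrightarrow> (\<forall>x\<in>carrier (H1 S). \<phi> x = 0 \<longrightarrow> \<phi> (H1_induced S h x) = 0)"

lemma preserves_kernelI_curve_system:
  assumes scs: "standard_curve_system S g a b" and \<phi>: "cover_hom S g a b m \<phi>"
    and "m > 0" "g \<ge> 1"
    and "\<And>i. i \<in> {1..g} \<Longrightarrow> \<phi> (H1_induced S h (loop_class S (a i))) = 0"
    and "\<And>i. i \<in> {2..g} \<Longrightarrow> \<phi> (H1_induced S h (loop_class S (b i))) = 0"
  shows "preserves_kernel S \<phi> h"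
  using cover_hom_induced_scale[OF assms] by (simp add: preserves_kernel_def)

lemma preserves_kernel_scale:
  assumes scs: "standard_curve_system S g a b" and \<phi>: "cover_hom S g a b m \<phi>"
    and "m > 0" "g \<ge> 1" and h: "preserves_kernel S \<phi> h" and x: "x \<in> carrier (H1 S)"
  shows "\<phi> (H1_induced S h x) = (\<phi> (H1_induced S h (loop_class S (b 1))) * \<phi> x) mod int m"
proof (rule cover_hom_induced_scale[OF scs \<phi> \<open>m > 0\<close> \<open>g \<ge> 1\<close> _ _ x])
  fix i assume i: "i \<in> {1..g}"
  then have "loop_class S (a i) \<in> carrier (H1 S)"
    by (intro loop_class_in_carrier standard_curve_system_loops[OF scs])
  with i show "\<phi> (H1_induced S h (loop_class S (a i))) = 0"
    using h \<phi> by (simp add: preserves_kernel_def cover_hom_def)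
next
  fix i assume i: "i \<in> {2..g}"
  then have "loop_class S (b i) \<in> carrier (H1 S)"
    by (intro loop_class_in_carrier standard_curve_system_loops[OF scs]) simp
  with i show "\<phi> (H1_induced S h (loop_class S (b i))) = 0"
    using h \<phi> by (simp add: preserves_kernel_def cover_hom_def)
qed

lemma preserves_kernel_inverse:
  assumes scs: "standard_curve_system S g a b" and \<phi>: "cover_hom S g a b m \<phi>"
    and "m > 0" "g \<ge> 1" and hh': "homeomorphism S S h h'" and h: "preserves_kernel S \<phi> h"
  shows "preserves_kernel S \<phi> h'"
  unfolding preserves_kernel_def
proof (intro ballI impI)
  let ?c = "\<phi> (H1_induced S h (loop_class S (b 1)))"
  let ?b1 = "loop_class S (b 1)"
  fix x assume x: "x \<in> carrier (H1 S)" and "\<phi> x = 0"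
  have b1: "?b1 \<in> carrier (H1 S)"
    using loop_class_in_carrier standard_curve_system_loops[OF scs] \<open>g \<ge> 1\<close> by auto
  have h'x: "H1_induced S h' x \<in> carrier (H1 S)" and h'b1: "H1_induced S h' ?b1 \<in> carrier (H1 S)"
    using hom_in_carrier[OF hom_induced_hom] x b1 by blast+
  note scale = preserves_kernel_scale[OF scs \<phi> \<open>m > 0\<close> \<open>g \<ge> 1\<close> h]
  have "(?c * \<phi> (H1_induced S h' ?b1)) mod int m = \<phi> ?b1"
    using scale[OF h'b1] hom_induced_homeomorphism_inverse[OF hh' b1] by simp
  also have "\<phi> ?b1 = 1"
    using \<phi> by (simp add: cover_hom_def)
  finally have unit: "(?c * \<phi> (H1_induced S h' ?b1)) mod int m = 1" .
  have "(?c * \<phi> (H1_induced S h' x)) mod int m = 0"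
    using scale[OF h'x] hom_induced_homeomorphism_inverse[OF hh' x] \<open>\<phi> x = 0\<close> by simp
  then show "\<phi> (H1_induced S h' x) = 0"
    by (rule eq_0_if_unit_mult_mod_eq_0[OF unit _ cover_hom_range[OF \<phi> h'x \<open>m > 0\<close>]])
qed

lemma preserves_kernel_dvd:
  assumes scs: "standard_curve_system S g a b"
    and \<phi>k: "cover_hom S g a b k \<phi>k" and \<phi>d: "cover_hom S g a b d \<phi>d"
    and kd: "k dvd d" "k \<ge> 2" "d > 0" "g \<ge> 1" and h: "preserves_kernel S \<phi>d h"
  shows "preserves_kernel S \<phi>k h"
  unfolding preserves_kernel_def
proof (intro ballI impI)
  fix x assume x: "x \<in> carrier (H1 S)" and "\<phi>k x = 0"
  have hx: "H1_induced S h x \<in> carrier (H1 S)"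
    using hom_in_carrier[OF hom_induced_hom] x by blast
  note reduce = cover_hom_reduce[OF scs \<phi>k \<phi>d kd(1-3)]
  let ?c = "\<phi>d (H1_induced S h (loop_class S (b 1)))"
  have "int k dvd \<phi>d x"
    using reduce[OF x] \<open>\<phi>k x = 0\<close> by (simp add: dvd_eq_mod_eq_0)
  have "\<phi>k (H1_induced S h x) = \<phi>d (H1_induced S h x) mod int k"
    by (rule reduce[OF hx])
  also have "\<dots> = (?c * \<phi>d x) mod int d mod int k"
    by (simp only: preserves_kernel_scale[OF scs \<phi>d \<open>d > 0\<close> \<open>g \<ge> 1\<close> h x])
  also have "\<dots> = (?c * \<phi>d x) mod int k"
    using \<open>k dvd d\<close> by (intro mod_mod_cancel) simp
  also have "\<dots> = 0"
    using \<open>int k dvd \<phi>d x\<close> by (metis dvd_imp_mod_0 dvd_mult)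
  finally show "\<phi>k (H1_induced S h x) = 0" .
qed

lemma preserves_kernel_lcm_iff:
  assumes scs: "standard_curve_system S g a b" and "g \<ge> 1" "k \<ge> 2" "l \<ge> 2"
    and \<phi>k: "cover_hom S g a b k \<phi>k" and \<phi>l: "cover_hom S g a b l \<phi>l"
    and \<phi>d: "cover_hom S g a b (lcm k l) \<phi>d"
  shows "preserves_kernel S \<phi>k h \<and> preserves_kernel S \<phi>l h \<longleftrightarrow> preserves_kernel S \<phi>d h"
proof
  assume "preserves_kernel S \<phi>k h \<and> preserves_kernel S \<phi>l h"
  moreover have "H1_induced S h x \<in> carrier (H1 S)" if "x \<in> carrier (H1 S)" for x
    using hom_in_carrier[OF hom_induced_hom] that by blast
  ultimately show "preserves_kernel S \<phi>d h"
    using cover_hom_lcm_kernel[OF scs \<open>k \<ge> 2\<close> \<open>l \<ge> 2\<close> \<phi>k \<phi>l \<phi>d]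
    by (simp add: preserves_kernel_def)
next
  have d: "lcm k l > 0"
    using assms by (simp add: lcm_pos_nat)
  assume "preserves_kernel S \<phi>d h"
  then show "preserves_kernel S \<phi>k h \<and> preserves_kernel S \<phi>l h"
    using preserves_kernel_dvd[OF scs \<phi>k \<phi>d dvd_lcm1 \<open>k \<ge> 2\<close> d \<open>g \<ge> 1\<close>]
      preserves_kernel_dvd[OF scs \<phi>l \<phi>d dvd_lcm2 \<open>l \<ge> 2\<close> d \<open>g \<ge> 1\<close>]
    by blast
qed

subsection \<open>The lifting criterion\<close>

definition closed_lift_iff_kernel ::
  "'a::topological_space set \<Rightarrow> 'b::topological_space set \<Rightarrow> ('b \<Rightarrow> 'a) \<Rightarrow> ('a chain set \<Rightarrow> int) \<Rightarrow> bool"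
  where "closed_lift_iff_kernel S X p \<phi> \<longleftrightarrow>
    (\<forall>\<gamma> \<gamma>'. loop_in S \<gamma> \<and> path \<gamma>' \<and> path_image \<gamma>' \<subseteq> X \<and> (\<forall>t\<in>{0..1}. p (\<gamma>' t) = \<gamma> t)
       \<longrightarrow> (pathfinish \<gamma>' = pathstart \<gamma>' \<longleftrightarrow> \<phi> (loop_class S \<gamma>) = 0))"

lemma closed_lift_iff_kernelD:
  assumes "closed_lift_iff_kernel S X p \<phi>" "loop_in S \<gamma>" "path \<gamma>'" "path_image \<gamma>' \<subseteq> X"
    "\<And>t. t \<in> {0..1} \<Longrightarrow> p (\<gamma>' t) = \<gamma> t"
  shows "pathfinish \<gamma>' = pathstart \<gamma>' \<longleftrightarrow> \<phi> (loop_class S \<gamma>) = 0"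
  using assms unfolding closed_lift_iff_kernel_def by blast

lemma is_cover_pE:
  assumes "is_cover_p S g a b m X p"
  obtains \<phi> where "covering_space X p S" "path_connected X"
    "cover_hom S g a b m \<phi>" "closed_lift_iff_kernel S X p \<phi>"
  using assms unfolding is_cover_p_def closed_lift_iff_kernel_def by blast

lemma kernel_loop_closed_lift:
  fixes S :: "'a::real_normed_vector set" and X :: "'b::real_normed_vector set"
  assumes cov: "covering_space X p S" and lift: "closed_lift_iff_kernel S X p \<phi>"
    and \<gamma>: "loop_in S \<gamma>" "\<phi> (loop_class S \<gamma>) = 0" and y: "y \<in> X" "p y = pathstart \<gamma>"
  obtains q where "path q" "path_image q \<subseteq> X" "pathstart q = y" "pathfinish q = y"
    "\<And>t. t \<in> {0..1} \<Longrightarrow> p (q t) = \<gamma> t"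
proof -
  have "path \<gamma>" "path_image \<gamma> \<subseteq> S"
    using \<gamma>(1) by (auto simp: loop_in_def)
  then obtain q where q: "path q" "path_image q \<subseteq> X" "pathstart q = y"
    and pq: "\<And>t. t \<in> {0..1} \<Longrightarrow> p (q t) = \<gamma> t"
    by (rule covering_space_lift_path_strong[OF cov y(1) _ _ y(2)[symmetric]]) blast
  moreover have "pathfinish q = pathstart q"
    using closed_lift_iff_kernelD[OF lift \<gamma>(1) q(1,2) pq] \<gamma>(2) by simp
  ultimately show ?thesis
    using that by simp
qed

lemma kernel_loop_compose_lifting:
  fixes S :: "'a::real_normed_vector set" and X :: "'b::real_normed_vector set"
  assumes cov: "covering_space X p S" and lift: "closed_lift_iff_kernel S X p \<phi>"
    and F: "continuous_on X F" "F ` X \<subseteq> X" and pF: "\<And>x. x \<in> X \<Longrightarrow> p (F x) = h (p x)"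
    and h: "continuous_on S h" "h ` S \<subseteq> S"
    and \<gamma>: "loop_in S \<gamma>" "\<phi> (loop_class S \<gamma>) = 0"
  shows "\<phi> (loop_class S (h \<circ> \<gamma>)) = 0"
proof -
  have "pathstart \<gamma> \<in> S"
    using \<gamma>(1) pathstart_in_path_image by (auto simp: loop_in_def)
  then have "pathstart \<gamma> \<in> p ` X"
    by (simp add: covering_space_imp_surjective[OF cov])
  then obtain x0 where x0: "x0 \<in> X" "p x0 = pathstart \<gamma>"
    by (metis imageE)
  obtain q where q: "path q" "path_image q \<subseteq> X" "pathstart q = x0" "pathfinish q = x0"
    and pq: "\<And>t. t \<in> {0..1} \<Longrightarrow> p (q t) = \<gamma> t"
    using kernel_loop_closed_lift[OF cov lift \<gamma> x0] by blast
  have "pathfinish (F \<circ> q) = pathstart (F \<circ> q)"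
    using q(3,4) by (simp add: pathfinish_compose pathstart_compose)
  moreover have "path (F \<circ> q)" "path_image (F \<circ> q) \<subseteq> X"
    using q(1,2) F continuous_on_subset path_continuous_image by (blast, auto simp: path_image_compose)
  moreover have "p ((F \<circ> q) t) = (h \<circ> \<gamma>) t" if "t \<in> {0..1}" for t
  proof -
    have "q t \<in> X"
      using q(2) that by (auto simp: path_image_def)
    then show ?thesis
      using pF pq that by simp
  qed
  ultimately show ?thesis
    using closed_lift_iff_kernelD[OF lift loop_in_compose[OF \<gamma>(1) h]] by blast
qed

lemma lifts_through_imp_preserves_kernel:
  fixes S :: "'a::euclidean_space set" and X :: "'b::real_normed_vector set"
  assumes scs: "standard_curve_system S g a b" and \<phi>: "cover_hom S g a b m \<phi>"
    and "m > 0" "g \<ge> 1"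
    and cov: "covering_space X p S" and lift: "closed_lift_iff_kernel S X p \<phi>"
    and h: "continuous_on S h" "h ` S \<subseteq> S" and "lifts_through X p h"
  shows "preserves_kernel S \<phi> h"
proof -
  obtain F where "homeo_of X F" and pF: "\<And>x. x \<in> X \<Longrightarrow> p (F x) = h (p x)"
    using \<open>lifts_through X p h\<close> unfolding lifts_through_def by blast
  then have F: "continuous_on X F" "F ` X \<subseteq> X"
    by (auto simp: homeo_of_def homeomorphism_def)
  have ker: "\<phi> (H1_induced S h (loop_class S \<gamma>)) = 0"
    if "loop_in S \<gamma>" "\<phi> (loop_class S \<gamma>) = 0" for \<gamma>
    using kernel_loop_compose_lifting[OF cov lift F pF h that] H1_induced_loop_class[OF that(1) h]
    by simp
  show ?thesis
  proof (rule preserves_kernelI_curve_system[OF scs \<phi> \<open>m > 0\<close> \<open>g \<ge> 1\<close>])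
    fix i assume "i \<in> {1..g}"
    then show "\<phi> (H1_induced S h (loop_class S (a i))) = 0"
      using ker standard_curve_system_loops[OF scs] \<phi> by (simp add: cover_hom_def)
  next
    fix i assume "i \<in> {2..g}"
    then show "\<phi> (H1_induced S h (loop_class S (b i))) = 0"
      using ker standard_curve_system_loops[OF scs] \<phi> by (simp add: cover_hom_def)
  qed
qed

lemma preserves_kernel_obtains_lift:
  fixes S :: "'a::real_normed_vector set" and X :: "'b::real_normed_vector set"
  assumes cov: "covering_space X p S" and X: "path_connected X" "locally path_connected X"
    and lift: "closed_lift_iff_kernel S X p \<phi>"
    and h: "continuous_on S h" "h ` S \<subseteq> S" and h_ker: "preserves_kernel S \<phi> h"
    and z: "z \<in> X" and y: "y \<in> X" "p y = h (p z)"
  obtains F where "continuous_on X F" "F \<in> X \<rightarrow> X" "F z = y" "\<And>x. x \<in> X \<Longrightarrow> p (F x) = h (p x)"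
proof -
  have p: "continuous_on X p" "p ` X = S"
    using cov by (simp_all add: covering_space_imp_continuous covering_space_imp_surjective)
  have closed_lift: "\<exists>q. path q \<and> path_image q \<subseteq> X \<and> pathstart q = y \<and> pathfinish q = y \<and>
                 homotopic_paths S ((h \<circ> p) \<circ> r) (p \<circ> q)"
    if r: "path r" "path_image r \<subseteq> X" "pathstart r = z" "pathfinish r = z" for r
  proof -
    have pr: "loop_in S (p \<circ> r)"
      using r p by (intro loop_in_compose[of X r]) (auto simp: loop_in_def)
    have "\<phi> (loop_class S (p \<circ> r)) = 0"
      using closed_lift_iff_kernelD[OF lift pr r(1,2)] r(3,4) by simp
    then have "\<phi> (H1_induced S h (loop_class S (p \<circ> r))) = 0"
      using h_ker loop_class_in_carrier[OF pr] by (simp add: preserves_kernel_def)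
    then have ker: "\<phi> (loop_class S (h \<circ> (p \<circ> r))) = 0"
      using H1_induced_loop_class[OF pr h] by simp
    have hpr: "loop_in S (h \<circ> (p \<circ> r))"
      using loop_in_compose[OF pr h] .
    have "p y = pathstart (h \<circ> (p \<circ> r))"
      using r(3) y by (simp add: pathstart_compose)
    then obtain q where q: "path q" "path_image q \<subseteq> X" "pathstart q = y" "pathfinish q = y"
      and pq: "\<And>t. t \<in> {0..1} \<Longrightarrow> p (q t) = (h \<circ> (p \<circ> r)) t"
      using kernel_loop_closed_lift[OF cov lift hpr ker y(1)] by blast
    have "homotopic_paths S (h \<circ> (p \<circ> r)) (p \<circ> q)"
      using hpr by (intro homotopic_paths_eq) (auto simp: loop_in_def pq)
    with q show ?thesis
      by (auto simp: o_assoc)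
  qed
  have hp: "continuous_on X (h \<circ> p)" "h \<circ> p \<in> X \<rightarrow> S" "(h \<circ> p) z = p y"
    using p h y(2) continuous_on_compose by auto
  obtain F where "continuous_on X F" "F \<in> X \<rightarrow> X" "F z = y" "\<And>x. x \<in> X \<Longrightarrow> p (F x) = (h \<circ> p) x"
    by (rule covering_space_lift_general[OF cov y(1) z X hp closed_lift]) blast+
  then show ?thesis
    using that by simp
qed

lemma covering_space_lift_inverse:
  fixes S :: "'a::real_normed_vector set" and X :: "'b::real_normed_vector set"
  assumes cov: "covering_space X p S" and "connected X"
    and F: "continuous_on X F" "F \<in> X \<rightarrow> X" "\<And>x. x \<in> X \<Longrightarrow> p (F x) = h (p x)"
    and G: "continuous_on X G" "G \<in> X \<rightarrow> X" "\<And>x. x \<in> X \<Longrightarrow> p (G x) = h' (p x)"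
    and hh': "\<And>x. x \<in> S \<Longrightarrow> h' (h x) = x"
    and z: "z \<in> X" "G (F z) = z" and x: "x \<in> X"
  shows "G (F x) = x"
proof -
  have p: "continuous_on X p" "p \<in> X \<rightarrow> S"
    using cov covering_space_imp_surjective by (auto simp: covering_space_imp_continuous)
  have "F ` X \<subseteq> X"
    using F(2) by auto
  then have GF: "continuous_on X (G \<circ> F)" "G \<circ> F \<in> X \<rightarrow> X"
    using continuous_on_compose[OF F(1) continuous_on_subset[OF G(1)]] G(2)
    by (auto simp: Pi_iff image_subset_iff)
  have p_GF: "p y = p ((G \<circ> F) y)" if "y \<in> X" for y
  proof -
    have "F y \<in> X" "p y \<in> S"
      using that F(2) p(2) by auto
    then show ?thesis
      using that F(3) G(3) hh' by simp
  qed
  have "(G \<circ> F) x = id x"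
    by (rule covering_space_lift_unique[OF cov _ p GF p_GF _ _ _ \<open>connected X\<close> z(1) x])
      (simp_all add: z(2))
  then show ?thesis
    by simp
qed

lemma preserves_kernel_imp_lifts_through:
  fixes S :: "'a::real_normed_vector set" and X :: "'b::real_normed_vector set"
  assumes cov: "covering_space X p S" and X: "path_connected X" "locally path_connected X" "X \<noteq> {}"
    and lift: "closed_lift_iff_kernel S X p \<phi>"
    and hh': "homeomorphism S S h h'" and "preserves_kernel S \<phi> h" "preserves_kernel S \<phi> h'"
  shows "lifts_through X p h"
proof -
  have h: "continuous_on S h" "h ` S \<subseteq> S" "continuous_on S h'" "h' ` S \<subseteq> S"
    and inv: "\<And>x. x \<in> S \<Longrightarrow> h' (h x) = x" "\<And>x. x \<in> S \<Longrightarrow> h (h' x) = x"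
    using hh' by (auto simp: homeomorphism_def)
  have pX: "p ` X = S"
    using cov by (rule covering_space_imp_surjective)
  obtain z where z: "z \<in> X"
    using \<open>X \<noteq> {}\<close> by blast
  then obtain y where y: "y \<in> X" "p y = h (p z)"
    using pX h(2) by (metis image_subset_iff imageE imageI)
  obtain F where F: "continuous_on X F" "F \<in> X \<rightarrow> X" "F z = y" "\<And>x. x \<in> X \<Longrightarrow> p (F x) = h (p x)"
    using preserves_kernel_obtains_lift[OF cov X(1,2) lift h(1,2) \<open>preserves_kernel S \<phi> h\<close> z y] by blast
  have "p z = h' (p y)"
    using y z inv(1) pX by auto
  then obtain G where G: "continuous_on X G" "G \<in> X \<rightarrow> X" "G y = z" "\<And>x. x \<in> X \<Longrightarrow> p (G x) = h' (p x)"
    using preserves_kernel_obtains_lift[OF cov X(1,2) lift h(3,4) \<open>preserves_kernel S \<phi> h'\<close> y(1) z]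
    by blast
  have "connected X"
    using X(1) by (rule path_connected_imp_connected)
  then have "homeomorphism X X F G"
    using covering_space_lift_inverse[OF cov _ F(1,2,4) G(1,2,4) inv(1) z]
      covering_space_lift_inverse[OF cov _ G(1,2,4) F(1,2,4) inv(2) y(1)] F(2,3) G(2,3)
    by (intro homeomorphismI F(1) G(1)) auto
  with F(4) show ?thesis
    unfolding lifts_through_def homeo_of_def by blast
qed

lemma locally_from_open_neighbourhoods:
  assumes "\<And>x. x \<in> S \<Longrightarrow> \<exists>U. openin (top_of_set S) U \<and> x \<in> U \<and> locally P U"
  shows "locally P S"
proof (rule locallyI)
  fix w x assume w: "openin (top_of_set S) w" and "x \<in> w"
  then obtain U where U: "openin (top_of_set S) U" "x \<in> U" "locally P U"
    using assms openin_imp_subset by blast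
  have "openin (top_of_set S) (w \<inter> U)"
    using w U(1) by (rule openin_Int)
  then have "openin (top_of_set U) (w \<inter> U)"
    by (rule openin_subset_trans[OF _ Int_lower2 openin_imp_subset[OF U(1)]])
  then obtain U' V where "openin (top_of_set U) U'" "P V" "x \<in> U'" "U' \<subseteq> V" "V \<subseteq> w \<inter> U"
    using locallyE[OF U(3)] \<open>x \<in> w\<close> U(2) by (metis IntI)
  moreover have "openin (top_of_set S) U'"
    using calculation(1) U(1) openin_trans by blast
  ultimately show "\<exists>U V. openin (top_of_set S) U \<and> P V \<and> x \<in> U \<and> U \<subseteq> V \<and> V \<subseteq> w"
    by blast
qed

lemma closed_surface_locally_path_connected:
  assumes "closed_surface S"
  shows "locally path_connected S"
proof (rule locally_from_open_neighbourhoods)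
  fix x assume "x \<in> S"
  then obtain U where U: "openin (top_of_set S) U" "x \<in> U" "U homeomorphic (UNIV :: (real^2) set)"
    using assms unfolding closed_surface_def by blast
  then have "locally path_connected U"
    using homeomorphic_locally[OF U(3)] homeomorphic_path_connectedness locally_path_connected_UNIV
    by blast
  with U show "\<exists>U. openin (top_of_set S) U \<and> x \<in> U \<and> locally path_connected U"
    by blast
qed

lemma in_LMod_iff_preserves_kernel:
  fixes X :: "'b::real_normed_vector set"
  assumes scs: "standard_curve_system S g a b" and "g \<ge> 1" "m > 0" and S: "closed_surface S"
    and cov: "covering_space X p S" and "path_connected X"
    and \<phi>: "cover_hom S g a b m \<phi>" and lift: "closed_lift_iff_kernel S X p \<phi>"
    and f: "homeo_of S f"
  shows "in_LMod S X p f \<longleftrightarrow> preserves_kernel S \<phi> f"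
proof
  assume "in_LMod S X p f"
  then obtain h where "homeo_of S h" "isotopic S f h" "lifts_through X p h"
    unfolding in_LMod_def by blast
  then have "preserves_kernel S \<phi> h"
    using lifts_through_imp_preserves_kernel[OF scs \<phi> \<open>m > 0\<close> \<open>g \<ge> 1\<close> cov lift]
    by (auto simp: homeo_of_def homeomorphism_def)
  then show "preserves_kernel S \<phi> f"
    using isotopic_hom_induced_eq[OF \<open>isotopic S f h\<close>] by (simp add: preserves_kernel_def)
next
  assume f_ker: "preserves_kernel S \<phi> f"
  obtain f' where ff': "homeomorphism S S f f'"
    using f unfolding homeo_of_def by blast
  have "X \<noteq> {}"
    using S covering_space_imp_surjective[OF cov] by (auto simp: closed_surface_def)
  moreover have "locally path_connected X"
    using covering_space_locally_path_connected_eq[OF cov] closed_surface_locally_path_connected[OF S]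
    by simp
  moreover have "preserves_kernel S \<phi> f'"
    using preserves_kernel_inverse[OF scs \<phi> \<open>m > 0\<close> \<open>g \<ge> 1\<close> ff' f_ker] .
  ultimately have "lifts_through X p f"
    using preserves_kernel_imp_lifts_through[OF cov \<open>path_connected X\<close> _ _ lift ff' f_ker] by blast
  with f isotopic_refl[OF f] show "in_LMod S X p f"
    unfolding in_LMod_def by blast
qed

theorem corollary2p4:
  fixes S :: "'a::euclidean_space set"
    and a b :: "nat \<Rightarrow> real \<Rightarrow> 'a"
    and Xk :: "'b::euclidean_space set" and pk :: "'b \<Rightarrow> 'a"
    and Xl :: "'c::euclidean_space set" and pl :: "'c \<Rightarrow> 'a"
    and Xd :: "'e::euclidean_space set" and pd :: "'e \<Rightarrow> 'a"
    and f :: "'a \<Rightarrow> 'a"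
    and g k l :: nat
  assumes "g \<ge> 1" and "k \<ge> 2" and "l \<ge> 2"
    and "orientable_closed_surface S"
    and "standard_curve_system S g a b"
    and "is_cover_p S g a b k Xk pk"
    and "is_cover_p S g a b l Xl pl"
    and "is_cover_p S g a b (lcm k l) Xd pd"
    and "homeo_of S f" and "orientation_preserving S f"
  shows "(in_LMod S Xk pk f \<and> in_LMod S Xl pl f) \<longleftrightarrow> in_LMod S Xd pd f"
proof -
  note g = assms(1) and k = assms(2) and l = assms(3) and scs = assms(5) and f = assms(9)
  have S: "closed_surface S"
    using assms(4) by (simp add: orientable_closed_surface_def)
  have pos: "k > 0" "l > 0" "lcm k l > 0"
    using k l by (simp_all add: lcm_pos_nat)
  obtain \<phi>k where \<phi>k: "cover_hom S g a b k \<phi>k"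
    and LMod_k: "in_LMod S Xk pk f \<longleftrightarrow> preserves_kernel S \<phi>k f"
    using is_cover_pE[OF assms(6)] in_LMod_iff_preserves_kernel[OF scs g pos(1) S _ _ _ _ f] by metis
  obtain \<phi>l where \<phi>l: "cover_hom S g a b l \<phi>l"
    and LMod_l: "in_LMod S Xl pl f \<longleftrightarrow> preserves_kernel S \<phi>l f"
    using is_cover_pE[OF assms(7)] in_LMod_iff_preserves_kernel[OF scs g pos(2) S _ _ _ _ f] by metis
  obtain \<phi>d where \<phi>d: "cover_hom S g a b (lcm k l) \<phi>d"
    and LMod_d: "in_LMod S Xd pd f \<longleftrightarrow> preserves_kernel S \<phi>d f"
    using is_cover_pE[OF assms(8)] in_LMod_iff_preserves_kernel[OF scs g pos(3) S _ _ _ _ f] by metis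
  show ?thesis
    using preserves_kernel_lcm_iff[OF scs g k l \<phi>k \<phi>l \<phi>d] LMod_k LMod_l LMod_d by simp
qed

end
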